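(* In the discrete single-buyer game with known total value $V$, there exists a mechanism for the seller which obtains total revenue at least $V/e-O(1)$ (the $O(1)$ being a constant independent of $T$ and of the buyer's values), when the buyer follows a dominant strategy.
   Context: Discrete single-buyer game: $T$ rounds, one divisible item per round; the buyer has value $v_t\in[0,1]$ for the round-$t$ item, arbitrary and unknown to the seller except that the total $V=\sum_t v_t$ is known to the seller. The buyer is limited-liability: in each round it cannot pay more than its value for the fraction of the item it receives. The seller may pay a reimbursement at the end; revenue is total payments minus reimbursements. A dominant strategy for the buyer is a utility-maximizing strategy (utility = value received minus payments plus reimbursement). *)

theory Defs
  imports Complex_Main
begin

text \<open>
  Discrete single-buyer game with T rounds (indexed 0, ..., T-1).
  A (deterministic, history-dependent) mechanism lets the buyer send a message
  (a real number) in every round; given the round t, the list of previous messages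
  and the current message it determines the fraction of the round-t item allocated
  to the buyer and the buyer's payment in that round.  At the end the seller pays a
  reimbursement that depends on the whole message history.
\<close>

record mechanism =
  alloc :: "nat \<Rightarrow> real list \<Rightarrow> real \<Rightarrow> real"
  pay   :: "nat \<Rightarrow> real list \<Rightarrow> real \<Rightarrow> real"
  reimb :: "real list \<Rightarrow> real"

definition well_formed :: "mechanism \<Rightarrow> bool" where
  "well_formed M \<longleftrightarrow>
     (\<forall>t h m. 0 \<le> alloc M t h m \<and> alloc M t h m \<le> 1 \<and> 0 \<le> pay M t h m)
     \<and> (\<forall>h. 0 \<le> reimb M h)"

definition q_at :: "mechanism \<Rightarrow> real list \<Rightarrow> nat \<Rightarrow> real" where
  "q_at M ms t = alloc M t (take t ms) (ms ! t)"

definition p_at :: "mechanism \<Rightarrow> real list \<Rightarrow> nat \<Rightarrow> real" where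
  "p_at M ms t = pay M t (take t ms) (ms ! t)"

definition feasible :: "mechanism \<Rightarrow> nat \<Rightarrow> (nat \<Rightarrow> real) \<Rightarrow> real list \<Rightarrow> bool" where
  "feasible M T v ms \<longleftrightarrow> length ms = T \<and> (\<forall>t<T. p_at M ms t \<le> v t * q_at M ms t)"

definition utility :: "mechanism \<Rightarrow> nat \<Rightarrow> (nat \<Rightarrow> real) \<Rightarrow> real list \<Rightarrow> real" where
  "utility M T v ms = (\<Sum>t<T. v t * q_at M ms t - p_at M ms t) + reimb M ms"

definition revenue :: "mechanism \<Rightarrow> nat \<Rightarrow> real list \<Rightarrow> real" where
  "revenue M T ms = (\<Sum>t<T. p_at M ms t) - reimb M ms"

text \<open>Dominant strategy = utility-maximizing strategy among all limited-liability
  feasible strategies (the buyer knows its values; the mechanism is deterministic, so a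
  strategy is a message sequence).\<close>
definition dominant :: "mechanism \<Rightarrow> nat \<Rightarrow> (nat \<Rightarrow> real) \<Rightarrow> real list \<Rightarrow> bool" where
  "dominant M T v ms \<longleftrightarrow> feasible M T v ms \<and>
     (\<forall>ms'. feasible M T v ms' \<longrightarrow> utility M T v ms' \<le> utility M T v ms)"

end

theory Submission
  imports Defs
begin

text \<open>
  The buyer's message is read as a bid \<open>b\<^sub>t \<ge> 0\<close>: in round \<open>t\<close> it receives the fraction
  \<open>\<phi>(B) = K / max K (V - B)\<close> of the item, where \<open>B\<close> is the total of its earlier bids, and pays
  \<open>b\<^sub>t\<close> per unit; at the end the seller refunds \<open>K + 1\<close> if the bids add up to \<open>V\<close>.
  Limited liability forces \<open>b\<^sub>t \<le> v\<^sub>t\<close>, so a buyer whose bids total \<open>R < V\<close> gains at most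
  \<open>\<phi>(R) (V - R) \<le> K\<close> by underbidding, less than the refund; hence dominant strategies bid
  exactly the values. The revenue is then a left Riemann sum of the increasing \<open>\<phi>\<close> with steps
  of length at most 1, which is at least \<open>\<integral>\<^sub>0\<^sup>V \<phi> - 1 = K ln (V / K) + K - 1\<close>.
  For \<open>K = V / e\<close> this is \<open>2 V / e - 1\<close>, and the refund leaves \<open>V / e - 2\<close>.
\<close>

lemma riemann_sum_ge_potential_gain:
  fixes f F :: "real \<Rightarrow> real" and d :: "nat \<Rightarrow> real"
  assumes mono: "mono f"
    and slope: "\<And>x y. x \<le> y \<Longrightarrow> F y - F x \<le> (y - x) * f y"
    and d: "\<And>t. t < n \<Longrightarrow> 0 \<le> d t \<and> d t \<le> 1"
  shows "(F (\<Sum>t<n. d t) - f (\<Sum>t<n. d t)) - (F 0 - f 0) \<le> (\<Sum>t<n. d t * f (\<Sum>s<t. d s))"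
proof -
  define S where "S t = (\<Sum>s<t. d s)" for t
  \<comment> \<open>The error \<open>d (f y - f x)\<close> of a left Riemann step with \<open>d \<le> 1\<close> is at most
    \<open>f y - f x\<close>, which telescopes; subtracting \<open>f\<close> from \<open>F\<close> pays for it.\<close>
  have step: "(F (S (Suc t)) - f (S (Suc t))) - (F (S t) - f (S t)) \<le> d t * f (S t)"
    if t: "t < n" for t
  proof -
    have "S (Suc t) = S t + d t"
      by (simp add: S_def)
    moreover have "(d t - 1) * f (S t + d t) \<le> (d t - 1) * f (S t)"
      using d[OF t] by (intro mult_left_mono_neg monoD[OF mono]) auto
    moreover have "F (S t + d t) - F (S t) \<le> d t * f (S t + d t)"
      using slope[of "S t" "S t + d t"] d[OF t] by simp
    ultimately show ?thesis
      by (simp add: algebra_simps)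
  qed
  have "(\<Sum>t<n. (F (S (Suc t)) - f (S (Suc t))) - (F (S t) - f (S t))) \<le> (\<Sum>t<n. d t * f (S t))"
    using step by (intro sum_mono) simp
  then show ?thesis
    using sum_lessThan_telescope[of "\<lambda>t. F (S t) - f (S t)" n] by (simp add: S_def)
qed

definition alloc_curve :: "real \<Rightarrow> real \<Rightarrow> real \<Rightarrow> real" where
  "alloc_curve V K x = K / max K (V - x)"

definition alloc_integral :: "real \<Rightarrow> real \<Rightarrow> real \<Rightarrow> real" where
  "alloc_integral V K x = max 0 (x - (V - K)) - K * ln (max K (V - x))"

lemma alloc_curve_pos: "0 < K \<Longrightarrow> 0 < alloc_curve V K x"
  by (simp add: alloc_curve_def)

lemma alloc_curve_le_1: "0 < K \<Longrightarrow> alloc_curve V K x \<le> 1"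
  by (simp add: alloc_curve_def)

lemma alloc_curve_mono: "0 < K \<Longrightarrow> mono (alloc_curve V K)"
  by (auto intro!: monoI divide_left_mono simp: alloc_curve_def)

lemma alloc_curve_times_remaining_le: "0 < K \<Longrightarrow> alloc_curve V K x * (V - x) \<le> K"
  by (simp add: alloc_curve_def divide_le_eq mult_left_mono)

lemma alloc_integral_increment_le:
  assumes K: "0 < K" and xy: "x \<le> y"
  shows "alloc_integral V K y - alloc_integral V K x \<le> (y - x) * alloc_curve V K y"
proof -
  define wx wy where "wx = max K (V - x)" and "wy = max K (V - y)"
  have wy: "0 < wy" "wy \<le> wx"
    using K xy by (auto simp: wx_def wy_def)
  have "ln wx - ln wy = ln (wx / wy)"
    using wy by (simp add: ln_div)
  also have "\<dots> \<le> wx / wy - 1"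
    using wy by (intro ln_le_minus_one) simp
  finally have "K * ln wx - K * ln wy \<le> K * (wx / wy - 1)"
    using K by (simp add: right_diff_distrib[symmetric])
  also have "\<dots> = alloc_curve V K y * (wx - wy)"
    using wy by (simp add: alloc_curve_def wy_def[symmetric] field_simps)
  finally have log_gap: "K * ln wx - K * ln wy \<le> alloc_curve V K y * (wx - wy)" .
  show ?thesis
  proof (cases "y \<le> V - K")
    case True
    then have "wx = V - x" "wy = V - y"
      using xy by (simp_all add: wx_def wy_def)
    then have "wx - wy = y - x" "x \<le> V - K"
      using True xy by simp_all
    then show ?thesis
      using True log_gap by (simp add: alloc_integral_def wx_def[symmetric] wy_def[symmetric] mult.commute)
  next
    case False
    then have "wy = K" "alloc_curve V K y = 1"
      using K by (auto simp: wy_def alloc_curve_def)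
    moreover have "alloc_integral V K y = y - (V - K) - K * ln wy"
      using False by (simp add: alloc_integral_def wy_def)
    moreover have "wx - K - max 0 (x - (V - K)) = V - K - x"
      by (simp add: wx_def max_def)
    ultimately show ?thesis
      using log_gap by (simp add: alloc_integral_def wx_def[symmetric])
  qed
qed

lemma alloc_potential_gain:
  assumes "0 < K" "K \<le> V"
  shows "(alloc_integral V K V - alloc_curve V K V) - (alloc_integral V K 0 - alloc_curve V K 0)
           = K * ln (V / K) + K - 1 + K / V"
  using assms by (simp add: alloc_integral_def alloc_curve_def ln_div algebra_simps)

definition bid :: "real \<Rightarrow> real" where
  "bid m = max 0 m"

definition bid_mech :: "real \<Rightarrow> real \<Rightarrow> mechanism" where
  "bid_mech V K =
     \<lparr>alloc = (\<lambda>t h m. alloc_curve V K (sum_list (map bid h))),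
      pay = (\<lambda>t h m. bid m * alloc_curve V K (sum_list (map bid h))),
      reimb = (\<lambda>h. if sum_list (map bid h) = V then K + 1 else 0)\<rparr>"

lemma well_formed_bid_mech: "0 < K \<Longrightarrow> well_formed (bid_mech V K)"
  unfolding well_formed_def bid_mech_def
  by (auto simp: bid_def alloc_curve_le_1 less_imp_le[OF alloc_curve_pos])

lemma sum_list_map_bid_take:
  "t \<le> length ms \<Longrightarrow> sum_list (map bid (take t ms)) = (\<Sum>s<t. bid (ms ! s))"
  by (simp add: sum_list_sum_nth atLeast0LessThan min_def)

lemma q_at_bid_mech:
  "t < length ms \<Longrightarrow> q_at (bid_mech V K) ms t = alloc_curve V K (\<Sum>s<t. bid (ms ! s))"
  by (simp add: q_at_def bid_mech_def sum_list_map_bid_take)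

lemma p_at_bid_mech: "p_at (bid_mech V K) ms t = bid (ms ! t) * q_at (bid_mech V K) ms t"
  by (simp add: p_at_def q_at_def bid_mech_def)

lemma reimb_bid_mech:
  "reimb (bid_mech V K) ms = (if (\<Sum>s<length ms. bid (ms ! s)) = V then K + 1 else 0)"
  using sum_list_map_bid_take[of "length ms" ms] by (simp add: bid_mech_def)

lemma feasible_bid_mech_bid_le:
  assumes K: "0 < K" and f: "feasible (bid_mech V K) T v ms" and t: "t < T"
  shows "bid (ms ! t) \<le> v t"
proof -
  have "bid (ms ! t) * q_at (bid_mech V K) ms t \<le> v t * q_at (bid_mech V K) ms t"
    using f t by (simp add: feasible_def p_at_bid_mech)
  moreover have "0 < q_at (bid_mech V K) ms t"
    using f t K by (simp add: feasible_def q_at_bid_mech alloc_curve_pos)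
  ultimately show ?thesis
    by simp
qed

lemma utility_bid_mech_le_surplus:
  assumes K: "0 < K" and V: "(\<Sum>t<T. v t) = V" and f: "feasible (bid_mech V K) T v ms"
  defines "R \<equiv> \<Sum>t<T. bid (ms ! t)"
  shows "utility (bid_mech V K) T v ms \<le> alloc_curve V K R * (V - R) + reimb (bid_mech V K) ms"
proof -
  have len: "length ms = T"
    using f by (simp add: feasible_def)
  have bid_le: "bid (ms ! t) \<le> v t" if "t < T" for t
    using feasible_bid_mech_bid_le[OF K f that] .
  have "(\<Sum>t<T. v t * q_at (bid_mech V K) ms t - p_at (bid_mech V K) ms t)
      = (\<Sum>t<T. (v t - bid (ms ! t)) * alloc_curve V K (\<Sum>s<t. bid (ms ! s)))"
    by (intro sum.cong) (auto simp: p_at_bid_mech q_at_bid_mech len algebra_simps)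
  also have "\<dots> \<le> (\<Sum>t<T. (v t - bid (ms ! t)) * alloc_curve V K R)"
  proof (intro sum_mono mult_left_mono)
    fix t assume "t \<in> {..<T}"
    then have "(\<Sum>s<t. bid (ms ! s)) \<le> R" "0 \<le> v t - bid (ms ! t)"
      using bid_le by (auto simp: R_def bid_def intro!: sum_mono2)
    then show "alloc_curve V K (\<Sum>s<t. bid (ms ! s)) \<le> alloc_curve V K R"
      "0 \<le> v t - bid (ms ! t)"
      using monoD[OF alloc_curve_mono[OF K]] by auto
  qed
  also have "\<dots> = alloc_curve V K R * (V - R)"
    by (simp add: sum_distrib_right[symmetric] sum_subtractf V R_def mult.commute)
  finally show ?thesis
    by (simp add: utility_def)
qed

lemma utility_bid_mech_le:
  assumes K: "0 < K" and V: "(\<Sum>t<T. v t) = V" and f: "feasible (bid_mech V K) T v ms"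
  shows "utility (bid_mech V K) T v ms \<le> K + 1"
    and "(\<Sum>t<T. bid (ms ! t)) \<noteq> V \<Longrightarrow> utility (bid_mech V K) T v ms < K + 1"
proof -
  have len: "length ms = T"
    using f by (simp add: feasible_def)
  note surplus = utility_bid_mech_le_surplus[OF K V f]
    alloc_curve_times_remaining_le[OF K, of V "\<Sum>t<T. bid (ms ! t)"]
  show "utility (bid_mech V K) T v ms \<le> K + 1"
    using surplus by (cases "(\<Sum>t<T. bid (ms ! t)) = V") (auto simp: reimb_bid_mech len)
  show "utility (bid_mech V K) T v ms < K + 1" if "(\<Sum>t<T. bid (ms ! t)) \<noteq> V"
    using surplus that by (simp add: reimb_bid_mech len)
qed

lemma truthful_bids_bid_mech:
  assumes v: "\<forall>t<T. 0 \<le> v t" and V: "(\<Sum>t<T. v t) = V"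
  shows "feasible (bid_mech V K) T v (map v [0..<T])"
    and "utility (bid_mech V K) T v (map v [0..<T]) = K + 1"
proof -
  have bids: "bid (v t) = v t" if "t < T" for t
    using v that by (simp add: bid_def)
  show "feasible (bid_mech V K) T v (map v [0..<T])"
    by (simp add: feasible_def p_at_bid_mech bids)
  show "utility (bid_mech V K) T v (map v [0..<T]) = K + 1"
    using V by (simp add: utility_def p_at_bid_mech bids reimb_bid_mech)
qed

lemma dominant_truthful_bids:
  assumes K: "0 < K" and v: "\<forall>t<T. 0 \<le> v t" and V: "(\<Sum>t<T. v t) = V"
  shows "dominant (bid_mech V K) T v (map v [0..<T])"
  using truthful_bids_bid_mech[OF v V] utility_bid_mech_le(1)[OF K V]
  by (simp add: dominant_def)

lemma dominant_bid_mech_bid_eq: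
  assumes K: "0 < K" and v: "\<forall>t<T. 0 \<le> v t" and V: "(\<Sum>t<T. v t) = V"
    and d: "dominant (bid_mech V K) T v ms" and t: "t < T"
  shows "bid (ms ! t) = v t"
proof -
  have f: "feasible (bid_mech V K) T v ms"
    using d by (simp add: dominant_def)
  have "K + 1 \<le> utility (bid_mech V K) T v ms"
    using d truthful_bids_bid_mech[OF v V, of K] by (auto simp: dominant_def)
  then have "(\<Sum>t<T. bid (ms ! t)) = (\<Sum>t<T. v t)"
    using utility_bid_mech_le(2)[OF K V f] V by fastforce
  then show ?thesis
    using sum_mono_inv[of "\<lambda>t. bid (ms ! t)" "{..<T}" v] feasible_bid_mech_bid_le[OF K f] t
    by simp
qed

lemma revenue_bid_mech_ge:
  assumes K: "0 < K" "K \<le> V" and v: "\<forall>t<T. 0 \<le> v t \<and> v t \<le> 1"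
    and V: "(\<Sum>t<T. v t) = V" and d: "dominant (bid_mech V K) T v ms"
  shows "K * ln (V / K) - 2 \<le> revenue (bid_mech V K) T ms"
proof -
  have len: "length ms = T"
    using d by (simp add: dominant_def feasible_def)
  have bids: "bid (ms ! t) = v t" if "t < T" for t
    using dominant_bid_mech_bid_eq[OF K(1) _ V d that] v by simp
  have pay: "p_at (bid_mech V K) ms t = v t * alloc_curve V K (\<Sum>s<t. v s)" if "t < T" for t
    using that by (simp add: p_at_bid_mech q_at_bid_mech len bids)
  have "K * ln (V / K) + K - 1 \<le> K * ln (V / K) + K - 1 + K / V"
    using K by simp
  also have "\<dots> \<le> (\<Sum>t<T. v t * alloc_curve V K (\<Sum>s<t. v s))"
    using riemann_sum_ge_potential_gain[OF alloc_curve_mono[OF K(1)] alloc_integral_increment_le[OF K(1)],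
        of T v V] alloc_potential_gain[OF K] v V K
    by simp
  also have "\<dots> = (\<Sum>t<T. p_at (bid_mech V K) ms t)"
    using pay by simp
  finally show ?thesis
    using V by (simp add: revenue_def reimb_bid_mech len bids)
qed

lemma revenue_bid_mech_ge_minus_refund:
  assumes "0 < K"
  shows "- (K + 1) \<le> revenue (bid_mech V K) T ms"
proof -
  have "0 \<le> p_at (bid_mech V K) ms t" for t
    using well_formed_bid_mech[OF assms] by (simp add: well_formed_def p_at_def)
  then have "0 \<le> (\<Sum>t<T. p_at (bid_mech V K) ms t)"
    by (simp add: sum_nonneg)
  then show ?thesis
    using assms by (simp add: revenue_def reimb_bid_mech)
qed

text \<open>The choice \<open>K = V / e\<close> maximizes the revenue guarantee \<open>K ln (V / K) - 2\<close>;
  when \<open>V \<le> 0\<close> any positive \<open>K\<close> will do.\<close>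
definition seller_mech :: "real \<Rightarrow> mechanism" where
  "seller_mech V = bid_mech V (if 0 < V then V / exp 1 else 1)"

lemma well_formed_seller_mech: "well_formed (seller_mech V)"
  unfolding seller_mech_def by (rule well_formed_bid_mech) simp

lemma seller_mech_dominant_exists:
  assumes "\<forall>t<T. 0 \<le> v t" and "(\<Sum>t<T. v t) = V"
  shows "\<exists>ms. dominant (seller_mech V) T v ms"
  using dominant_truthful_bids[OF _ assms, of "if 0 < V then V / exp 1 else 1"]
  unfolding seller_mech_def by auto

lemma seller_mech_revenue_ge:
  assumes v: "\<forall>t<T. 0 \<le> v t \<and> v t \<le> 1" and V: "(\<Sum>t<T. v t) = V"
    and d: "dominant (seller_mech V) T v ms"
  shows "V / exp 1 - 2 \<le> revenue (seller_mech V) T ms"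
proof (cases "0 < V")
  case True
  have "0 < V / exp 1" "V / exp 1 \<le> V"
    using True by (simp_all add: divide_le_eq)
  from revenue_bid_mech_ge[OF this v V] d True show ?thesis
    by (simp add: seller_mech_def)
next
  case False
  moreover have "0 \<le> V"
    using v unfolding V[symmetric] by (auto intro: sum_nonneg)
  ultimately show ?thesis
    using revenue_bid_mech_ge_minus_refund[of 1 V T ms] by (simp add: seller_mech_def)
qed

theorem theorem17:
  shows "\<exists>C::real. \<forall>(T::nat) (V::real). \<exists>M. well_formed M \<and>
           (\<forall>v::nat \<Rightarrow> real. (\<forall>t<T. 0 \<le> v t \<and> v t \<le> 1) \<and> (\<Sum>t<T. v t) = V \<longrightarrow>
              (\<exists>ms. dominant M T v ms) \<and>
              (\<forall>ms. dominant M T v ms \<longrightarrow> revenue M T ms \<ge> V / exp 1 - C))"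
  apply (intro exI[of _ 2] allI)
  subgoal for T V
    by (intro exI[of _ "seller_mech V"] conjI allI impI well_formed_seller_mech)
      (use seller_mech_dominant_exists seller_mech_revenue_ge in auto)
  done

end
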